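(* Assume that $\hat R$ satisfies condition (ii) and let $\hat F\in\mathrm{Aut}(V\otimes V)$. Let $M$ and $M'$ be operators on $V$ with entries in a common associative algebra $\mathfrak A$, both half-quantum matrices, i.e. $S^{(2)}_{12}M_{\bar1}M_{\bar2}A^{(2)}_{12}=0$ and $S^{(2)}_{12}M'_{\bar1}M'_{\bar2}A^{(2)}_{12}=0$, and satisfying \[ \hat F_{12}M_1\hat F_{12}^{-1}M'_1=M'_1\hat F_{12}M_1\hat F_{12}^{-1}. \] Then the product $MM'$ (matrix product with entries in $\mathfrak A$) is again a half-quantum matrix: $S^{(2)}_{12}(MM')_{\bar1}(MM')_{\bar2}A^{(2)}_{12}=0$.
   Context: Let $V$ be a finite-dimensional complex vector space, $\mathrm{Id}$ the identity. For an operator $X$ on $V$ (possibly with entries in $\mathfrak A$), $X_j$ denotes $X$ acting in the $j$-th tensor factor of $V\otimes V$; for $Y$ on $V\otimes V$, $Y_{12}=Y$. Condition (ii): $q\in\mathbb C^*$ with $q+q^{-1}\ne0$ and $\hat R=qS^{(2)}-q^{-1}A^{(2)}$ with $S^{(2)},A^{(2)}$ idempotents on $V\otimes V$, $S^{(2)}+A^{(2)}=\mathrm{Id}$. For an $\mathfrak A$-valued $N$ on $V$: $N_{\bar1}:=N_1$, $N_{\bar2}:=\hat F_{12}N_1\hat F_{12}^{-1}$. *)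

theory Defs
  imports Complex_Main
begin

text \<open>V is modelled by a finite basis index type 'n; operators on V are
  functions 'n => 'n => _ (matrices), operators on V (x) V are matrices indexed by
  'n \<times> 'n. The algebra \<AA> is an associative ring 'a with a complex scalar action s.\<close>

definition is_calg :: "(complex \<Rightarrow> 'a::ring \<Rightarrow> 'a) \<Rightarrow> bool" where
  "is_calg s \<longleftrightarrow>
     (\<forall>a b x. s (a + b) x = s a x + s b x) \<and>
     (\<forall>a x y. s a (x + y) = s a x + s a y) \<and>
     (\<forall>a b x. s (a * b) x = s a (s b x)) \<and>
     (\<forall>x. s 1 x = x) \<and>
     (\<forall>a x y. s a (x * y) = s a x * y) \<and>
     (\<forall>a x y. s a (x * y) = x * s a y)"

definition mmul :: "('i::finite \<Rightarrow> 'i \<Rightarrow> 'a::semiring_0) \<Rightarrow> ('i \<Rightarrow> 'i \<Rightarrow> 'a) \<Rightarrow> 'i \<Rightarrow> 'i \<Rightarrow> 'a" where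
  "mmul X Y = (\<lambda>i k. \<Sum>j\<in>UNIV. X i j * Y j k)"

definition lsc :: "(complex \<Rightarrow> 'a::ring \<Rightarrow> 'a) \<Rightarrow> ('i::finite \<Rightarrow> 'i \<Rightarrow> complex) \<Rightarrow> ('i \<Rightarrow> 'i \<Rightarrow> 'a) \<Rightarrow> 'i \<Rightarrow> 'i \<Rightarrow> 'a" where
  "lsc s C X = (\<lambda>i k. \<Sum>j\<in>UNIV. s (C i j) (X j k))"

definition rsc :: "(complex \<Rightarrow> 'a::ring \<Rightarrow> 'a) \<Rightarrow> ('i::finite \<Rightarrow> 'i \<Rightarrow> 'a) \<Rightarrow> ('i \<Rightarrow> 'i \<Rightarrow> complex) \<Rightarrow> 'i \<Rightarrow> 'i \<Rightarrow> 'a" where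
  "rsc s X C = (\<lambda>i k. \<Sum>j\<in>UNIV. s (C j k) (X i j))"

definition idm :: "'i \<Rightarrow> 'i \<Rightarrow> complex" where
  "idm = (\<lambda>i j. if i = j then 1 else 0)"

text \<open>X acting in the first tensor factor: X_1 = X \<otimes> Id\<close>
definition tens1 :: "('n \<Rightarrow> 'n \<Rightarrow> 'a::zero) \<Rightarrow> ('n \<times> 'n) \<Rightarrow> ('n \<times> 'n) \<Rightarrow> 'a" where
  "tens1 X = (\<lambda>(i, j) (k, l). if j = l then X i k else 0)"

text \<open>N_{bar 1} = N_1, N_{bar 2} = F N_1 F^{-1}\<close>
definition bar1 :: "('n \<Rightarrow> 'n \<Rightarrow> 'a::zero) \<Rightarrow> ('n \<times> 'n) \<Rightarrow> ('n \<times> 'n) \<Rightarrow> 'a" where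
  "bar1 N = tens1 N"

definition bar2 :: "(complex \<Rightarrow> 'a::ring \<Rightarrow> 'a) \<Rightarrow> ('n::finite \<times> 'n \<Rightarrow> 'n \<times> 'n \<Rightarrow> complex)
     \<Rightarrow> ('n \<times> 'n \<Rightarrow> 'n \<times> 'n \<Rightarrow> complex) \<Rightarrow> ('n \<Rightarrow> 'n \<Rightarrow> 'a) \<Rightarrow> ('n \<times> 'n) \<Rightarrow> ('n \<times> 'n) \<Rightarrow> 'a" where
  "bar2 s F Finv N = rsc s (lsc s F (tens1 N)) Finv"

definition cond_ii :: "complex \<Rightarrow> ('i::finite \<Rightarrow> 'i \<Rightarrow> complex) \<Rightarrow> ('i \<Rightarrow> 'i \<Rightarrow> complex) \<Rightarrow> ('i \<Rightarrow> 'i \<Rightarrow> complex) \<Rightarrow> bool" where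
  "cond_ii q R S A \<longleftrightarrow> q \<noteq> 0 \<and> q + inverse q \<noteq> 0 \<and>
     mmul S S = S \<and> mmul A A = A \<and> (\<forall>x y. S x y + A x y = idm x y) \<and>
     R = (\<lambda>x y. q * S x y - inverse q * A x y)"

definition half_quantum :: "(complex \<Rightarrow> 'a::ring \<Rightarrow> 'a) \<Rightarrow> ('n::finite \<times> 'n \<Rightarrow> 'n \<times> 'n \<Rightarrow> complex)
     \<Rightarrow> ('n \<times> 'n \<Rightarrow> 'n \<times> 'n \<Rightarrow> complex) \<Rightarrow> ('n \<times> 'n \<Rightarrow> 'n \<times> 'n \<Rightarrow> complex)
     \<Rightarrow> ('n \<times> 'n \<Rightarrow> 'n \<times> 'n \<Rightarrow> complex) \<Rightarrow> ('n \<Rightarrow> 'n \<Rightarrow> 'a) \<Rightarrow> bool" where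
  "half_quantum s S A F Finv M \<longleftrightarrow>
     rsc s (lsc s S (mmul (bar1 M) (bar2 s F Finv M))) A = (\<lambda>_ _. 0)"

end

theory Submission
  imports Defs
begin

text \<open>Since \<open>F\<^sup>-\<^sup>1 F = Id\<close>, the map \<open>N \<mapsto> N\<^sub>2\<close> (for \<open>N\<^sub>2 = F N\<^sub>1 F\<^sup>-\<^sup>1\<close>)
  is multiplicative, so \<open>(MM')\<^sub>1 (MM')\<^sub>2 = M\<^sub>1 M'\<^sub>1 M\<^sub>2 M'\<^sub>2\<close>, and the exchange
  relation \<open>M\<^sub>2 M'\<^sub>1 = M'\<^sub>1 M\<^sub>2\<close> rewrites this as \<open>Z W\<close> with \<open>Z = M\<^sub>1 M\<^sub>2\<close>,
  \<open>W = M'\<^sub>1 M'\<^sub>2\<close>. Matrices \<open>X\<close> with \<open>S X A = 0\<close> are closed under products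
  once \<open>S + A = Id\<close>: inserting \<open>Id = S + A\<close> gives \<open>S Z W A = (S Z)(S W A) + (S Z A) W = 0\<close>.\<close>

lemma is_calgD:
  assumes "is_calg s"
  shows "s (a + b) x = s a x + s b x" "s a (x + y) = s a x + s a y"
    "s (a * b) x = s a (s b x)" "s 1 x = x"
    "s a (x * y) = s a x * y" "s a (x * y) = x * s a y"
  using assms unfolding is_calg_def by auto

lemma calg_zero_right: "is_calg s \<Longrightarrow> s a 0 = 0"
  using is_calgD(2)[of s a 0 0] by simp

lemma calg_zero_left: "is_calg s \<Longrightarrow> s 0 x = 0"
  using is_calgD(1)[of s 0 0 x] by simp

lemma calg_sum_right: "is_calg s \<Longrightarrow> s a (sum f I) = (\<Sum>i\<in>I. s a (f i))"
  by (induction I rule: infinite_finite_induct) (auto simp: calg_zero_right is_calgD)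

lemma calg_sum_left: "is_calg s \<Longrightarrow> s (sum c I) x = (\<Sum>i\<in>I. s (c i) x)"
  by (induction I rule: infinite_finite_induct) (auto simp: calg_zero_left is_calgD)

lemma mmul_assoc: "mmul (mmul X Y) Z = mmul X (mmul Y Z)"
  unfolding mmul_def
  by (auto simp: sum_distrib_left sum_distrib_right mult.assoc intro!: ext sum.swap)

lemma mmul_add_left: "mmul (\<lambda>i j. X i j + Y i j) Z = (\<lambda>i j. mmul X Z i j + mmul Y Z i j)"
  unfolding mmul_def by (auto simp: distrib_right sum.distrib intro!: ext)

lemma mmul_zero_left: "mmul (\<lambda>_ _. 0) Y = (\<lambda>_ _. 0)"
  unfolding mmul_def by simp

lemma mmul_zero_right: "mmul X (\<lambda>_ _. 0) = (\<lambda>_ _. 0)"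
  unfolding mmul_def by simp

context
  fixes s :: "complex \<Rightarrow> 'a::ring \<Rightarrow> 'a"
  assumes alg: "is_calg s"
begin

lemma lsc_mmul: "lsc s C (mmul X Y) = mmul (lsc s C X) Y"
  unfolding lsc_def mmul_def
  by (auto simp: calg_sum_right[OF alg] sum_distrib_right is_calgD(5)[OF alg] intro!: ext sum.swap)

lemma rsc_mmul: "rsc s (mmul X Y) C = mmul X (rsc s Y C)"
  unfolding rsc_def mmul_def
  by (auto simp: calg_sum_right[OF alg] sum_distrib_left is_calgD(6)[OF alg] intro!: ext sum.swap)

lemma mmul_rsc: "mmul (rsc s X C) Y = mmul X (lsc s C Y)"
  unfolding rsc_def mmul_def lsc_def
  by (auto simp: sum_distrib_left sum_distrib_right is_calgD(5,6)[OF alg, symmetric]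
      intro!: ext sum.swap)

lemma lsc_lsc: "lsc s C (lsc s D X) = lsc s (mmul C D) X"
  unfolding lsc_def mmul_def
  by (auto simp: calg_sum_right[OF alg] calg_sum_left[OF alg] is_calgD(3)[OF alg]
      intro!: ext sum.swap)

lemma rsc_lsc: "rsc s (lsc s C X) D = lsc s C (rsc s X D)"
  unfolding lsc_def rsc_def
  by (auto simp: calg_sum_right[OF alg] is_calgD(3)[OF alg, symmetric] mult.commute
      intro!: ext sum.swap)

lemma lsc_idm: "lsc s idm X = X"
proof (intro ext)
  fix i k
  have "lsc s idm X i k = (\<Sum>j\<in>UNIV. if j = i then X j k else 0)"
    unfolding lsc_def idm_def
    by (intro sum.cong) (auto simp: calg_zero_left[OF alg] is_calgD(4)[OF alg])
  then show "lsc s idm X i k = X i k" by simp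
qed

lemma rsc_idm: "rsc s X idm = X"
proof (intro ext)
  fix i k
  have "rsc s X idm i k = (\<Sum>j\<in>UNIV. if j = k then X i j else 0)"
    unfolding rsc_def idm_def
    by (intro sum.cong) (auto simp: calg_zero_left[OF alg] is_calgD(4)[OF alg])
  then show "rsc s X idm i k = X i k" by simp
qed

lemma rsc_add_right: "rsc s X (\<lambda>i j. C i j + D i j) = (\<lambda>i j. rsc s X C i j + rsc s X D i j)"
  unfolding rsc_def by (auto simp: is_calgD(1)[OF alg] sum.distrib intro!: ext)

lemma rsc_add_left: "rsc s (\<lambda>i j. X i j + Y i j) C = (\<lambda>i j. rsc s X C i j + rsc s Y C i j)"
  unfolding rsc_def by (auto simp: is_calgD(2)[OF alg] sum.distrib intro!: ext)

lemma lsc_add: "lsc s C (\<lambda>i j. X i j + Y i j) = (\<lambda>i j. lsc s C X i j + lsc s C Y i j)"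
  unfolding lsc_def by (auto simp: is_calgD(2)[OF alg] sum.distrib intro!: ext)

lemma rsc_zero: "rsc s (\<lambda>_ _. 0) C = (\<lambda>_ _. 0)"
  unfolding rsc_def by (simp add: calg_zero_right[OF alg])

lemma sandwich_zero_mmul:
  assumes SA: "\<And>i j. S i j + A i j = idm i j"
    and Z: "rsc s (lsc s S Z) A = (\<lambda>_ _. 0)"
    and W: "rsc s (lsc s S W) A = (\<lambda>_ _. 0)"
  shows "rsc s (lsc s S (mmul Z W)) A = (\<lambda>_ _. 0)"
proof -
  have idm_split: "idm = (\<lambda>i j. S i j + A i j)"
    using SA by auto
  have "mmul Z W = mmul (rsc s Z idm) W"
    by (simp only: rsc_idm)
  also have "\<dots> = (\<lambda>i j. mmul (rsc s Z S) W i j + mmul (rsc s Z A) W i j)"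
    unfolding idm_split rsc_add_right mmul_add_left ..
  moreover
  have "rsc s (lsc s S (mmul (rsc s Z S) W)) A = mmul (lsc s S Z) (rsc s (lsc s S W) A)"
    by (simp only: mmul_rsc lsc_mmul rsc_mmul)
  moreover have "lsc s S (mmul (rsc s Z A) W) = mmul (rsc s (lsc s S Z) A) W"
    by (simp only: lsc_mmul rsc_lsc)
  ultimately show ?thesis
    using Z W by (simp add: lsc_add rsc_add_left mmul_zero_left mmul_zero_right rsc_zero)
qed

end

lemma tens1_mmul:
  fixes M M' :: "'n::finite \<Rightarrow> 'n \<Rightarrow> 'a::semiring_0"
  shows "tens1 (mmul M M') = mmul (tens1 M) (tens1 M')"
proof (intro ext, clarify)
  fix i j k l :: 'n
  have "mmul (tens1 M) (tens1 M') (i, j) (k, l)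
      = (\<Sum>a\<in>UNIV. \<Sum>b\<in>UNIV. tens1 M (i, j) (a, b) * tens1 M' (a, b) (k, l))"
    unfolding mmul_def
    by (simp add: UNIV_Times_UNIV[symmetric] sum.cartesian_product del: UNIV_Times_UNIV)
  also have "\<dots> = (\<Sum>a\<in>UNIV. \<Sum>b\<in>UNIV. if b = j then (if j = l then M i a * M' a k else 0) else 0)"
    unfolding tens1_def by (intro sum.cong) auto
  finally show "tens1 (mmul M M') (i, j) (k, l) = mmul (tens1 M) (tens1 M') (i, j) (k, l)"
    unfolding tens1_def mmul_def by simp
qed

lemma bar2_mmul:
  assumes alg: "is_calg s" and Finv_F: "mmul Finv F = idm"
  shows "bar2 s F Finv (mmul M M') = mmul (bar2 s F Finv M) (bar2 s F Finv M')"
proof -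
  have "mmul (bar2 s F Finv M) (bar2 s F Finv M')
      = mmul (lsc s F (tens1 M)) (lsc s (mmul Finv F) (rsc s (tens1 M') Finv))"
    unfolding bar2_def mmul_rsc[OF alg] by (simp only: rsc_lsc[OF alg] lsc_lsc[OF alg])
  also have "\<dots> = rsc s (lsc s F (mmul (tens1 M) (tens1 M'))) Finv"
    by (simp only: Finv_F lsc_idm[OF alg] rsc_mmul[OF alg] lsc_mmul[OF alg])
  finally show ?thesis
    unfolding bar2_def tens1_mmul by simp
qed

theorem mainTheorem8:
  fixes s :: "complex \<Rightarrow> 'a::ring \<Rightarrow> 'a"
    and q :: complex
    and R S A F Finv :: "'n::finite \<times> 'n \<Rightarrow> 'n \<times> 'n \<Rightarrow> complex"
    and M M' :: "'n \<Rightarrow> 'n \<Rightarrow> 'a"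
  assumes alg: "is_calg s"
    and ii: "cond_ii q R S A"
    and F_inv1: "mmul F Finv = idm"
    and F_inv2: "mmul Finv F = idm"
    and hqM: "half_quantum s S A F Finv M"
    and hqM': "half_quantum s S A F Finv M'"
    and comm: "mmul (bar2 s F Finv M) (tens1 M') = mmul (tens1 M') (bar2 s F Finv M)"
  shows "half_quantum s S A F Finv (mmul M M')"
proof -
  let ?P = "bar2 s F Finv M" and ?Q = "bar2 s F Finv M'"
  have SA: "\<And>i j. S i j + A i j = idm i j"
    using ii unfolding cond_ii_def by blast
  have "mmul (bar1 (mmul M M')) (bar2 s F Finv (mmul M M'))
      = mmul (mmul (tens1 M) (tens1 M')) (mmul ?P ?Q)"
    unfolding bar1_def tens1_mmul bar2_mmul[OF alg F_inv2] ..
  also have "\<dots> = mmul (mmul (tens1 M) ?P) (mmul (tens1 M') ?Q)"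
    by (metis mmul_assoc comm)
  finally show ?thesis
    using hqM hqM' unfolding half_quantum_def bar1_def
    by (simp add: sandwich_zero_mmul[OF alg SA])
qed

end
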